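(* For any closed $k$-subspace $W\subset k[z_1^{-1}]((z_2))$ with $\mathrm{Supp}(W)=W_0:=k[z_1^{-1},z_2^{-1}]$ there exists a unique operator $S=1+S^-$ with $S^-\in\hat D_1[[\partial_2^{-1}]]\partial_2^{-1}$ such that $W_0S=W$.
   Context: $k$ is a field of characteristic zero, $R=k[[x_1,x_2]]$, $M=(x_1,x_2)$, $\mathrm{ord}_M(a)=\sup\{n:a\in M^n\}$, $\partial_i=\partial/\partial x_i$. $\hat D_1$ is the ring of formal series $\sum_{q\ge0}a_q\partial_1^q$, $a_q\in R$, with $\mathrm{ord}_M(a_q)\to\infty$ as $q\to\infty$ (multiplication by the Leibniz rule). $\hat E_+=\hat D_1((\partial_2^{-1}))$ is the ring of formal Laurent series in $\partial_2^{-1}$ with coefficients in $\hat D_1$ written on the left, multiplied by the Leibniz rule $\partial_2^{n}a=\sum_{j\ge0}\binom{n}{j}\partial_2^j(a)\partial_2^{n-j}$ ($n\in\mathbb Z$); $\hat D_1[[\partial_2^{-1}]]\partial_2^{-1}\subset\hat E_+$. The space $k[z_1^{-1}]((z_2))$ is a right $\hat E_+$-module via $\hat E_+/(x_1\hat E_++x_2\hat E_+)\simeq k[z_1^{-1}]((z_2))$, the class of $p\,\partial_1^i\partial_2^j$ ($p\in R$) corresponding to $p(0,0)z_1^{-i}z_2^{-j}$. On $\mathbb Z^2$ use the anti-lexicographic order: $(a,b)<(c,d)$ iff $b<d$, or $b=d$ and $a<c$. For $0\ne v=\sum v_{ij}z_1^iz_2^j$, its lowest term $\mathrm{LT}(v)$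 is the term $v_{ij}z_1^iz_2^j$, $v_{ij}\ne0$, with minimal $(i,j)$. The support $\mathrm{Supp}(W)$ of a subspace $W$ is the closed subspace (in the two-dimensional local field topology of $k((z_1))((z_2))$) generated by $\mathrm{LT}(a)$, $0\neq a\in W$; thus $\mathrm{Supp}(W)=W_0$ means the exponents of lowest terms of nonzero elements of $W$ are exactly the pairs $(-i,-j)$, $i,j\ge0$. *)

theory Defs
  imports Main "HOL-Library.Groups_Big_Fun"
begin

text \<open>
* R = k[[x1,x2]]: a power series is its coefficient function a :: nat => nat => 'k,
  a i j = coefficient of x1^i x2^j.
* An element of E+ = D1hat((d2^-1)) is P :: nat => int => (nat => nat => 'k),
  P q m = coefficient (in R, written on the left) of d1^q d2^m.
* An element of k((z1))((z2)) is v :: int => int => 'k, v i j = coefficient of z1^i z2^j.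
\<close>

type_synonym 'k pser = "nat \<Rightarrow> nat \<Rightarrow> 'k"
type_synonym 'k op = "nat \<Rightarrow> int \<Rightarrow> 'k pser"
type_synonym 'k ser2 = "int \<Rightarrow> int \<Rightarrow> 'k"

definition in_Mpow :: "('k::zero) pser \<Rightarrow> nat \<Rightarrow> bool" where
  "in_Mpow a n \<longleftrightarrow> (\<forall>i j. i + j < n \<longrightarrow> a i j = 0)"

definition ps_mult :: "('k::comm_ring_1) pser \<Rightarrow> 'k pser \<Rightarrow> 'k pser" where
  "ps_mult a b = (\<lambda>i j. \<Sum>i1\<le>i. \<Sum>j1\<le>j. a i1 j1 * b (i - i1) (j - j1))"

definition ps_deriv :: "nat \<Rightarrow> nat \<Rightarrow> ('k::comm_ring_1) pser \<Rightarrow> 'k pser" where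
  "ps_deriv al be a = (\<lambda>i j. pochhammer (of_nat (Suc i)) al * pochhammer (of_nat (Suc j)) be
                               * a (i + al) (j + be))"

definition is_D1hat :: "(nat \<Rightarrow> ('k::zero) pser) \<Rightarrow> bool" where
  "is_D1hat a \<longleftrightarrow> (\<forall>n. \<exists>Q. \<forall>q\<ge>Q. in_Mpow (a q) n)"

definition is_Eplus :: "('k::zero) op \<Rightarrow> bool" where
  "is_Eplus P \<longleftrightarrow> (\<exists>M. \<forall>m>M. \<forall>q. P q m = (\<lambda>_ _. 0)) \<and> (\<forall>m. is_D1hat (\<lambda>q. P q m))"

definition is_Sminus :: "('k::zero) op \<Rightarrow> bool" where
  "is_Sminus P \<longleftrightarrow> is_Eplus P \<and> (\<forall>q m. m \<ge> 0 \<longrightarrow> P q m = (\<lambda>_ _. 0))"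

definition E_one :: "('k::{zero,one}) op" where
  "E_one = (\<lambda>q m i j. if q = 0 \<and> m = 0 \<and> i = 0 \<and> j = 0 then 1 else 0)"

definition E_add :: "('k::plus) op \<Rightarrow> 'k op \<Rightarrow> 'k op" where
  "E_add P Q = (\<lambda>q m i j. P q m i j + Q q m i j)"

text \<open>Product in E+ by the Leibniz rule:
  (a d1^q d2^m)(b d1^r d2^n) = sum_{al,be} C(q,al) C(m,be) a (d1^al d2^be b) d1^(q-al+r) d2^(m-be+n).
  For elements of E+ the sum defining each coefficient is finite.\<close>
definition E_mult :: "('k::field_char_0) op \<Rightarrow> 'k op \<Rightarrow> 'k op" where
  "E_mult P Q = (\<lambda>s t i j.
     Sum_any (\<lambda>(q::nat, m::int, r::nat, n::int, al::nat, be::nat).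
       if al \<le> q \<and> q - al + r = s \<and> m - int be + n = t
       then of_nat (q choose al) * ((of_int m :: 'k) gchoose be)
            * ps_mult (P q m) (ps_deriv al be (Q r n)) i j
       else 0))"

definition L2 :: "('k::zero) ser2 set" where
  "L2 = {v. (\<exists>N. \<forall>j<N. \<forall>i. v i j = 0) \<and> (\<forall>j. \<exists>M. \<forall>i<M. v i j = 0)}"

definition Vsp :: "('k::zero) ser2 set" where
  "Vsp = {v. (\<forall>i j. i > 0 \<longrightarrow> v i j = 0) \<and> (\<exists>N. \<forall>j<N. \<forall>i. v i j = 0)
             \<and> (\<forall>j. finite {i. v i j \<noteq> 0})}"

definition W0 :: "('k::zero) ser2 set" where
  "W0 = {v. finite {(i, j). v i j \<noteq> 0} \<and> (\<forall>i j. v i j \<noteq> 0 \<longrightarrow> i \<le> 0 \<and> j \<le> 0)}"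

text \<open>the isomorphism E+/(x1 E+ + x2 E+) = k[z1^-1]((z2)): class of p d1^q d2^m
  goes to p(0,0) z1^-q z2^-m\<close>
definition res :: "('k::zero) op \<Rightarrow> 'k ser2" where
  "res P = (\<lambda>i j. if i \<le> 0 then P (nat (- i)) (- j) 0 0 else 0)"

text \<open>the representative of v with constant coefficients\<close>
definition lift :: "('k::zero) ser2 \<Rightarrow> 'k op" where
  "lift v = (\<lambda>q m i j. if i = 0 \<and> j = 0 then v (- int q) (- m) else 0)"

text \<open>right action of E+ on k[z1^-1]((z2))\<close>
definition act :: "('k::field_char_0) ser2 \<Rightarrow> 'k op \<Rightarrow> 'k ser2" where
  "act v P = res (E_mult (lift v) P)"

definition subspace2 :: "('k::field) ser2 set \<Rightarrow> bool" where
  "subspace2 W \<longleftrightarrow> (\<lambda>_ _. 0) \<in> W \<and> (\<forall>v\<in>W. \<forall>w\<in>W. (\<lambda>i j. v i j + w i j) \<in> W)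
                    \<and> (\<forall>c. \<forall>v\<in>W. (\<lambda>i j. c * v i j) \<in> W)"

text \<open>Closedness in the two-dimensional local field topology of k((z1))((z2)) (k discrete),
  restricted to k[z1^-1]((z2)).  Basic neighbourhoods of 0 are
  {x. \<forall>j<N. \<forall>i<n j. x i j = 0} for N :: int, n :: int => int.\<close>
definition closed2 :: "('k::zero) ser2 set \<Rightarrow> bool" where
  "closed2 W \<longleftrightarrow> (\<forall>x\<in>Vsp. (\<forall>N (n::int \<Rightarrow> int). \<exists>w\<in>W. \<forall>j<N. \<forall>i<n j. x i j = w i j) \<longrightarrow> x \<in> W)"

definition lt_exp :: "('k::zero) ser2 \<Rightarrow> int \<times> int" where
  "lt_exp v = (THE (i, j). v i j \<noteq> 0 \<and>
                 (\<forall>i' j'. v i' j' \<noteq> 0 \<longrightarrow> j < j' \<or> (j = j' \<and> i \<le> i')))"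

text \<open>Supp(W): the closed subspace of k((z1))((z2)) generated by the lowest terms of
  nonzero elements of W, i.e. all series supported on the set of lowest-term exponents.\<close>
definition Supp :: "('k::zero) ser2 set \<Rightarrow> 'k ser2 set" where
  "Supp W = {f \<in> L2. \<forall>i j. f i j \<noteq> 0 \<longrightarrow> (i, j) \<in> lt_exp ` (W - {\<lambda>_ _. 0})}"

end

theory Submission
  imports Defs
begin

(*
  For a monomial z1^-a z2^-b and S = 1 + S^-, the image
  z1^-a z2^-b S is computed by the Leibniz rule: only the Taylor coefficients
  of order (al, be) <= (a, b) of the coefficients of S^- at x = 0 contribute.
  It equals z1^-a z2^-b, plus a "lower part" built from orders (al, be) < (a, b)
  and living in z2-degrees > -b, plus a "top part" a! b! (order (a,b) Taylor
  coefficients of S^-), which lives in positive z2-degrees since S^- has only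
  negative powers of d2.

  The hypothesis Supp W = W0 gives two facts about W: every x in k[z1^-1]((z2))
  agrees in z2-degrees <= 0 with a unique element of W (existence by
  elimination of lowest terms, uniqueness since W has no nonzero element
  supported in positive z2-degrees).  Hence the top parts, i.e. all Taylor
  coefficients of S^-, are forced recursively on a + b by requiring
  z1^-a z2^-b S to lie in W.  This gives uniqueness and defines a candidate S; for it
  W0 S is contained in W by linearity, and W in W0 S again by elimination of lowest
  terms, since z1^-a z2^-b S has lowest term z1^-a z2^-b.
*)

section \<open>Monomials and the action of W0 on E+\<close>

definition point :: "int \<Rightarrow> int \<Rightarrow> ('k::zero_neq_one) ser2" where
  "point i j = (\<lambda>i' j'. if i' = i \<and> j' = j then 1 else 0)"

abbreviation zmono :: "nat \<Rightarrow> nat \<Rightarrow> ('k::zero_neq_one) ser2" where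
  "zmono a b \<equiv> point (- int a) (- int b)"

definition msupp :: "('k::zero) ser2 \<Rightarrow> (nat \<times> nat) set" where
  "msupp v = {(a, b). v (- int a) (- int b) \<noteq> 0}"

lemma finite_msupp:
  assumes "v \<in> W0" shows "finite (msupp v)"
proof (rule finite_subset)
  show "msupp v \<subseteq> (\<lambda>(i, j). (nat (-i), nat (-j))) ` {(i, j). v i j \<noteq> 0}"
  proof
    fix p assume "p \<in> msupp v"
    then obtain a b where "p = (a, b)" "v (- int a) (- int b) \<noteq> 0" by (auto simp: msupp_def)
    then show "p \<in> (\<lambda>(i, j). (nat (-i), nat (-j))) ` {(i, j). v i j \<noteq> 0}"
      by (auto intro!: image_eqI[where x="(- int a, - int b)"])
  qed
  show "finite ((\<lambda>(i, j). (nat (-i), nat (-j))) ` {(i, j). v i j \<noteq> 0})"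
    using assms unfolding W0_def by auto
qed

text \<open>The image z1^-a z2^-b Q of a monomial under an operator Q, written out by the
  Leibniz rule: its coefficient at z1^i z2^j (i <= 0) is a sum of the terms mono_term,
  indexed by the orders (al, be) <= (a, b) of the Taylor coefficients at 0 of the
  coefficients of Q that contribute.\<close>
definition mono_term :: "nat \<Rightarrow> nat \<Rightarrow> ('k::field_char_0) op \<Rightarrow> int \<Rightarrow> int \<Rightarrow> nat \<times> nat \<Rightarrow> 'k" where
  "mono_term a b Q i j = (\<lambda>(al, be). if a \<le> nat (-i) + al then
     of_nat (a choose al) * of_nat (b choose be)
       * (fact al * fact be * Q (nat (-i) + al - a) (- j - int b + int be) al be) else 0)"

definition mono_image :: "nat \<Rightarrow> nat \<Rightarrow> ('k::field_char_0) op \<Rightarrow> 'k ser2" where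
  "mono_image a b Q = (\<lambda>i j. if i \<le> 0 then (\<Sum>p\<in>{..a} \<times> {..b}. mono_term a b Q i j p) else 0)"

definition act_term :: "('k::field_char_0) ser2 \<Rightarrow> 'k op \<Rightarrow> nat \<Rightarrow> int
    \<Rightarrow> nat \<times> int \<times> nat \<times> int \<times> nat \<times> nat \<Rightarrow> 'k" where
  "act_term v Q s t = (\<lambda>(q, m, r, n, al, be).
     if al \<le> q \<and> q - al + r = s \<and> m - int be + n = t
     then of_nat (q choose al) * ((of_int m :: 'k) gchoose be)
          * ps_mult (lift v q m) (ps_deriv al be (Q r n)) 0 0
     else 0)"

lemma act_Sum_any: "act v Q (- int s) t = Sum_any (act_term v Q s (- t))"
  by (simp add: act_def res_def E_mult_def act_term_def)

text \<open>Since v has constant coefficients, only the constant terms of the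
  Leibniz summands survive.\<close>
lemma act_term_eq:
  "act_term v Q s t (q, m, r, n, al, be) = (if al \<le> q \<and> q - al + r = s \<and> m - int be + n = t
     then of_nat (q choose al) * ((of_int m :: 'k::field_char_0) gchoose be)
          * (v (- int q) (- m) * (fact al * fact be * Q r n al be)) else 0)"
  by (simp add: act_term_def ps_mult_def lift_def ps_deriv_def pochhammer_fact)

lemma act_term_support:
  fixes v :: "('k::field_char_0) ser2"
  assumes v: "v \<in> W0" and F: "msupp v \<subseteq> F"
  shows "{x. act_term v Q s t x \<noteq> 0} \<subseteq>
    (\<lambda>((q, b), (al, be)). (q, int b, s + al - q, t - int b + int be, al, be))
      ` Sigma F (\<lambda>(q, b). {..q} \<times> {..b})"
proof
  fix x assume "x \<in> {x. act_term v Q s t x \<noteq> 0}"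
  then obtain q m r n al be where x: "x = (q, m, r, n, al, be)"
    and nz: "act_term v Q s t (q, m, r, n, al, be) \<noteq> 0"
    by (cases x) auto
  from nz have c: "al \<le> q" "q - al + r = s" "m - int be + n = t"
    and vn: "v (- int q) (- m) \<noteq> 0" and gb: "((of_int m :: 'k) gchoose be) \<noteq> 0"
    by (auto simp: act_term_eq split: if_splits)
  from vn v have "m \<ge> 0" unfolding W0_def by force
  then obtain b where mb: "m = int b" by (metis nonneg_int_cases)
  have "be \<le> b"
    using gb mb by (metis binomial_eq_0 binomial_gbinomial not_le of_int_of_nat_eq of_nat_0)
  moreover have "(q, b) \<in> F" using F vn mb by (auto simp: msupp_def)
  ultimately show "x \<in> (\<lambda>((q, b), (al, be)). (q, int b, s + al - q, t - int b + int be, al, be))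
      ` Sigma F (\<lambda>(q, b). {..q} \<times> {..b})"
    using x c mb by (auto intro!: image_eqI[where x="((q, b), (al, be))"])
qed

lemma act_as_sum:
  fixes v :: "('k::field_char_0) ser2"
  assumes v: "v \<in> W0" and F: "finite F" "msupp v \<subseteq> F"
  shows "act v Q i j = (\<Sum>(a, b)\<in>F. v (- int a) (- int b) * mono_image a b Q i j)"
proof (cases "i \<le> 0")
  case False
  then show ?thesis by (simp add: act_def res_def mono_image_def)
next
  case True
  define s where "s = nat (-i)"
  define g where "g = (\<lambda>((q::nat, b::nat), (al::nat, be::nat)).
    (q, int b, s + al - q, - j - int b + int be, al, be))"
  define D where "D = Sigma F (\<lambda>(q, b). {..q} \<times> {..b})"
  have i: "i = - int s" using True by (simp add: s_def)
  have "act v Q i j = Sum_any (act_term v Q s (- j))" by (simp add: i act_Sum_any)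
  also have "\<dots> = sum (act_term v Q s (- j)) (g ` D)"
    using act_term_support[OF v F(2)] F(1)
    by (intro Sum_any.expand_superset finite_imageI) (auto simp: g_def D_def)
  also have "\<dots> = sum (act_term v Q s (- j) \<circ> g) D"
    by (rule sum.reindex) (auto simp: inj_on_def g_def D_def)
  also have "\<dots> = (\<Sum>p\<in>F. \<Sum>y\<in>{..fst p} \<times> {..snd p}. (act_term v Q s (- j) \<circ> g) (p, y))"
    using F(1) unfolding D_def by (subst sum.Sigma) (auto simp: split_def)
  also have "\<dots> = (\<Sum>(a, b)\<in>F. v (- int a) (- int b) * mono_image a b Q i j)"
    using True
    by (auto intro!: sum.cong simp: g_def act_term_eq mono_image_def mono_term_def
        sum_distrib_left binomial_gbinomial s_def algebra_simps)
  finally show ?thesis .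
qed

lemma W0_lin:
  fixes v w :: "('k::field) ser2"
  assumes "v \<in> W0" "w \<in> W0"
  shows "(\<lambda>i j. c * v i j + d * w i j) \<in> W0"
proof -
  have "{(i, j). c * v i j + d * w i j \<noteq> 0} \<subseteq> {(i, j). v i j \<noteq> 0} \<union> {(i, j). w i j \<noteq> 0}"
    by auto
  then have "finite {(i, j). c * v i j + d * w i j \<noteq> 0}"
    by (rule finite_subset) (use assms in \<open>auto simp: W0_def\<close>)
  moreover have "i \<le> 0 \<and> j \<le> 0" if "c * v i j + d * w i j \<noteq> 0" for i j
  proof -
    from that have "v i j \<noteq> 0 \<or> w i j \<noteq> 0" by auto
    then show ?thesis using assms unfolding W0_def by blast
  qed
  ultimately show ?thesis unfolding W0_def by blast
qed

lemma zero_W0: "(\<lambda>_ _. 0) \<in> W0"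
  unfolding W0_def by simp

lemma point_W0_iff: "point i j \<in> W0 \<longleftrightarrow> i \<le> 0 \<and> j \<le> 0"
proof -
  have "{(i', j'). point i j i' j' \<noteq> 0} = {(i, j)}" by (auto simp: point_def)
  then show ?thesis unfolding W0_def by (auto simp: point_def)
qed

lemma point_L2: "point i j \<in> L2"
proof -
  have "\<forall>j'<j. \<forall>i'. point i j i' j' = 0" "\<forall>j'. \<forall>i'<i. point i j i' j' = 0"
    by (auto simp: point_def)
  then show ?thesis unfolding L2_def by blast
qed

lemma Vsp_lin:
  fixes x y :: "('k::field) ser2"
  assumes "x \<in> Vsp" "y \<in> Vsp"
  shows "(\<lambda>i j. c * x i j + d * y i j) \<in> Vsp"
proof -
  from assms obtain N1 N2 where "\<forall>j<N1. \<forall>i. x i j = 0" and "\<forall>j<N2. \<forall>i. y i j = 0"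
    unfolding Vsp_def by blast
  then have "\<forall>j<min N1 N2. \<forall>i. c * x i j + d * y i j = 0" by simp
  moreover have "finite {i. c * x i j + d * y i j \<noteq> 0}" for j
  proof (rule finite_subset)
    show "{i. c * x i j + d * y i j \<noteq> 0} \<subseteq> {i. x i j \<noteq> 0} \<union> {i. y i j \<noteq> 0}" by auto
  qed (use assms in \<open>auto simp: Vsp_def\<close>)
  moreover have "\<forall>i j. i > 0 \<longrightarrow> c * x i j + d * y i j = 0" using assms unfolding Vsp_def by auto
  ultimately show ?thesis unfolding Vsp_def by blast
qed

lemma point_Vsp:
  assumes "i \<le> 0" shows "point i j \<in> Vsp"
proof -
  have "finite {i'. point i j i' j' \<noteq> 0}" for j'
    by (rule finite_subset[of _ "{i}"]) (auto simp: point_def)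
  moreover have "\<forall>j' < j. \<forall>i'. point i j i' j' = 0" by (auto simp: point_def)
  ultimately show ?thesis using assms unfolding Vsp_def by (auto simp: point_def)
qed

lemma subspace2_zero: "subspace2 V \<Longrightarrow> (\<lambda>_ _. 0) \<in> V"
  unfolding subspace2_def by blast

lemma subspace2_lin:
  assumes "subspace2 V" "v \<in> V" "w \<in> V" shows "(\<lambda>i j. c * v i j + d * w i j) \<in> V"
proof -
  have "(\<lambda>i j. c * v i j) \<in> V" "(\<lambda>i j. d * w i j) \<in> V"
    using assms unfolding subspace2_def by auto
  then show ?thesis using assms(1) unfolding subspace2_def by fastforce
qed

lemma act_lin:
  fixes v w :: "('k::field_char_0) ser2"
  assumes v: "v \<in> W0" and w: "w \<in> W0"
  shows "act (\<lambda>i j. c * v i j + d * w i j) Q = (\<lambda>i j. c * act v Q i j + d * act w Q i j)"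
proof (intro ext)
  fix i j
  let ?F = "msupp v \<union> msupp w"
  have F: "finite ?F" using finite_msupp[OF v] finite_msupp[OF w] by blast
  have "msupp (\<lambda>i j. c * v i j + d * w i j) \<subseteq> ?F" by (auto simp: msupp_def)
  then show "act (\<lambda>i j. c * v i j + d * w i j) Q i j = c * act v Q i j + d * act w Q i j"
    using act_as_sum[OF W0_lin[OF v w] F] act_as_sum[OF v F] act_as_sum[OF w F]
    by (simp add: sum.distrib sum_distrib_left split_def algebra_simps)
qed

lemma subspace2_act_image:
  fixes Q :: "('k::field_char_0) op"
  shows "subspace2 ((\<lambda>v. act v Q) ` W0)"
proof -
  have zero: "act (\<lambda>_ _. 0) Q = (\<lambda>_ _. 0 :: 'k)"
    using act_as_sum[OF zero_W0, of "{}"] by (intro ext) (simp add: msupp_def)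
  have lin: "(\<lambda>i j. c * act v Q i j + d * act w Q i j) \<in> (\<lambda>v. act v Q) ` W0"
    if "v \<in> W0" "w \<in> W0" for c d v w
    using act_lin[OF that, of c d Q] W0_lin[OF that, of c d]
    by (intro image_eqI[where x="\<lambda>i j. c * v i j + d * w i j"]) simp_all
  show ?thesis unfolding subspace2_def
  proof (intro conjI ballI allI)
    show "(\<lambda>_ _. 0) \<in> (\<lambda>v. act v Q) ` W0" using zero zero_W0 by (metis image_eqI)
  next
    fix x y assume "x \<in> (\<lambda>v. act v Q) ` W0" "y \<in> (\<lambda>v. act v Q) ` W0"
    then show "(\<lambda>i j. x i j + y i j) \<in> (\<lambda>v. act v Q) ` W0" using lin[of _ _ 1 1] by auto
  next
    fix c x assume "x \<in> (\<lambda>v. act v Q) ` W0"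
    then show "(\<lambda>i j. c * x i j) \<in> (\<lambda>v. act v Q) ` W0" using lin[of _ _ c 0] by auto
  qed
qed

lemma act_zmono: "act (zmono a b) Q = mono_image a b (Q :: ('k::field_char_0) op)"
proof (intro ext)
  fix i j
  have W0: "(zmono a b :: 'k ser2) \<in> W0" by (simp add: point_W0_iff)
  have "msupp (zmono a b :: 'k ser2) \<subseteq> {(a, b)}" by (auto simp: msupp_def point_def)
  then show "act (zmono a b) Q i j = mono_image a b Q i j"
    using act_as_sum[OF W0, of "{(a, b)}"] by (simp add: point_def)
qed

section \<open>Lowest terms\<close>

definition is_lowest :: "('k::zero) ser2 \<Rightarrow> int \<Rightarrow> int \<Rightarrow> bool" where
  "is_lowest v i j \<longleftrightarrow> v i j \<noteq> 0 \<and> (\<forall>i' j'. v i' j' \<noteq> 0 \<longrightarrow> j < j' \<or> (j = j' \<and> i \<le> i'))"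

text \<open>A nonzero element of k[z1^-1]((z2)) has a lowest term: its z2-degrees are
  bounded below and each z2-coefficient is a Laurent polynomial in z1.\<close>
lemma lowest_exists:
  fixes v :: "('k::zero) ser2"
  assumes "v \<in> Vsp" "v i0 j0 \<noteq> 0"
  shows "\<exists>i j. is_lowest v i j \<and> j \<le> j0"
proof -
  from assms obtain N where N: "\<forall>j<N. \<forall>i. v i j = 0" unfolding Vsp_def by blast
  define P where "P = (\<lambda>k::nat. \<exists>i. v i (N + int k) \<noteq> 0)"
  have j0N: "j0 \<ge> N" using N assms(2) by force
  then have P0: "P (nat (j0 - N))" using assms(2) by (auto simp: P_def)
  define j where "j = N + int (LEAST k. P k)"
  have "j \<le> j0" using Least_le[of P, OF P0] j0N by (simp add: j_def)
  have j_min: "j \<le> j'" if "v i' j' \<noteq> 0" for i' j'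
  proof -
    have "j' \<ge> N" using N that by force
    then have "P (nat (j' - N))" using that by (auto simp: P_def)
    then show ?thesis using Least_le[of P] \<open>j' \<ge> N\<close> unfolding j_def by force
  qed
  define I where "I = {i. v i j \<noteq> 0}"
  have finI: "finite I" using assms(1) unfolding Vsp_def I_def by blast
  have "I \<noteq> {}" using LeastI[of P, OF P0] by (auto simp: P_def I_def j_def)
  then have "v (Min I) j \<noteq> 0" using Min_in[OF finI] by (simp add: I_def)
  moreover have "j < j' \<or> (j = j' \<and> Min I \<le> i')" if "v i' j' \<noteq> 0" for i' j'
    using j_min[OF that] Min_le[OF finI, of i'] that by (auto simp: I_def)
  ultimately have "is_lowest v (Min I) j" by (simp add: is_lowest_def)
  then show ?thesis using \<open>j \<le> j0\<close> by blast
qed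

lemma lowest_unique: "is_lowest v i j \<Longrightarrow> is_lowest v i' j' \<Longrightarrow> i = i' \<and> j = j'"
proof -
  assume "is_lowest v i j" "is_lowest v i' j'"
  then have "j < j' \<or> (j = j' \<and> i \<le> i')" "j' < j \<or> (j' = j \<and> i' \<le> i)"
    unfolding is_lowest_def by blast+
  then show ?thesis by auto
qed

lemma lt_exp_lowest:
  assumes "is_lowest v i j" shows "lt_exp v = (i, j)"
proof -
  have "lt_exp v = (THE p. case p of (i', j') \<Rightarrow> is_lowest v i' j')"
    unfolding lt_exp_def is_lowest_def by (rule refl)
  also have "\<dots> = (i, j)"
  proof (rule the_equality)
    show "case (i, j) of (i', j') \<Rightarrow> is_lowest v i' j'" using assms by simp
    fix p assume "case p of (i', j') \<Rightarrow> is_lowest v i' j'"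
    then show "p = (i, j)" by (cases p) (auto dest: lowest_unique[OF assms])
  qed
  finally show ?thesis .
qed

lemma pos_or_lowest_nonpos:
  fixes y :: "('k::zero) ser2"
  assumes "y \<in> Vsp"
  obtains "\<forall>i j. y i j \<noteq> 0 \<longrightarrow> j > 0" | i j where "is_lowest y i j" "i \<le> 0" "j \<le> 0"
proof (cases "\<forall>i j. y i j \<noteq> 0 \<longrightarrow> j > 0")
  case False
  then obtain i1 j1 where "y i1 j1 \<noteq> 0" "j1 \<le> 0" by force
  then obtain i j where "is_lowest y i j" "j \<le> 0"
    using lowest_exists[OF assms] by fastforce
  moreover have "i \<le> 0" using \<open>is_lowest y i j\<close> assms by (force simp: is_lowest_def Vsp_def)
  ultimately show ?thesis using that by blast
qed (use that in blast)

text \<open>Induction on the lowest term: the quadrant i, j <= 0 is well ordered by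
  the anti-lexicographic order, so one may eliminate the lowest term step by step
  until only positive z2-degrees remain.\<close>
lemma lowest_term_induct [consumes 1, case_names pos lowest]:
  fixes P :: "('k::zero) ser2 \<Rightarrow> bool"
  assumes x: "x \<in> Vsp"
    and pos: "\<And>x. x \<in> Vsp \<Longrightarrow> \<forall>i j. x i j \<noteq> 0 \<longrightarrow> j > 0 \<Longrightarrow> P x"
    and lowest: "\<And>x i j. x \<in> Vsp \<Longrightarrow> is_lowest x i j \<Longrightarrow> i \<le> 0 \<Longrightarrow> j \<le> 0 \<Longrightarrow>
      (\<And>y. y \<in> Vsp \<Longrightarrow> \<forall>i' j'. y i' j' \<noteq> 0 \<longrightarrow> j < j' \<or> (j = j' \<and> i < i') \<Longrightarrow> P y) \<Longrightarrow> P x"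
  shows "P x"
proof -
  define R where "R = inv_image (less_than <*lex*> less_than)
    (\<lambda>(i::int, j::int). (nat (-j), nat (-i)))"
  have wfR: "wf R" unfolding R_def by (intro wf_inv_image wf_lex_prod wf_less_than)
  have main: "\<forall>x\<in>Vsp. is_lowest x (fst p) (snd p) \<longrightarrow> fst p \<le> 0 \<longrightarrow> snd p \<le> 0 \<longrightarrow> P x"
    for p :: "int \<times> int"
    using wfR
  proof (induction p rule: wf_induct_rule)
    case (less p)
    obtain i j where p: "p = (i, j)" by (cases p)
    show ?case
    proof (intro ballI impI)
      fix z :: "'k ser2" assume "z \<in> Vsp" "is_lowest z (fst p) (snd p)" "fst p \<le> 0" "snd p \<le> 0"
      then have "z \<in> Vsp" "is_lowest z i j" "i \<le> 0" "j \<le> 0" by (auto simp: p)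
      then show "P z"
      proof (rule lowest)
        fix y :: "'k ser2" assume y: "y \<in> Vsp"
          and above: "\<forall>i' j'. y i' j' \<noteq> 0 \<longrightarrow> j < j' \<or> (j = j' \<and> i < i')"
        from y show "P y"
        proof (cases rule: pos_or_lowest_nonpos)
          case 1 then show ?thesis using pos y by blast
        next
          case (2 i2 j2)
          then have "j < j2 \<or> (j = j2 \<and> i < i2)" using above by (simp add: is_lowest_def)
          then have "((i2, j2), p) \<in> R"
            using 2 \<open>i \<le> 0\<close> \<open>j \<le> 0\<close> by (auto simp: R_def p)
          then show ?thesis using less 2 y by fastforce
        qed
      qed
    qed
  qed
  from x show ?thesis
  proof (cases rule: pos_or_lowest_nonpos)
    case 1 then show ?thesis using pos x by blast
  next
    case (2 i j) then show ?thesis using main[of "(i, j)"] x by simp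
  qed
qed

lemma extend_by_lowest_terms:
  assumes V: "subspace2 V" "V \<subseteq> Vsp"
    and low: "\<And>i j. i \<le> 0 \<Longrightarrow> j \<le> 0 \<Longrightarrow> \<exists>u\<in>V. is_lowest u i j"
    and x: "x \<in> Vsp"
  shows "\<exists>w\<in>V. \<forall>i j. j \<le> 0 \<longrightarrow> w i j = x i j"
  using x
proof (induction x rule: lowest_term_induct)
  case (pos x)
  have "x i j = 0" if "j \<le> 0" for i j
  proof (rule ccontr)
    assume "x i j \<noteq> 0"
    then have "j > 0" using pos(2) by blast
    then show False using that by simp
  qed
  then show ?case using subspace2_zero[OF V(1)] by (intro bexI[of _ "\<lambda>_ _. 0"]) auto
next
  case (lowest x i j)
  obtain u where u: "u \<in> V" "is_lowest u i j" using low lowest(3,4) by blast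
  have uV: "u \<in> Vsp" using u(1) V(2) by blast
  define c where "c = x i j / u i j"
  define y where "y = (\<lambda>i j. 1 * x i j + (- c) * u i j)"
  have unz: "u i j \<noteq> 0" using u by (simp add: is_lowest_def)
  have "y \<in> Vsp" unfolding y_def by (rule Vsp_lin[OF lowest(1) uV])
  moreover have "\<forall>i' j'. y i' j' \<noteq> 0 \<longrightarrow> j < j' \<or> (j = j' \<and> i < i')"
  proof (intro allI impI)
    fix i' j' assume y: "y i' j' \<noteq> 0"
    then have "x i' j' \<noteq> 0 \<or> u i' j' \<noteq> 0" by (auto simp: y_def)
    then have "j < j' \<or> (j = j' \<and> i \<le> i')" using lowest(2) u(2) by (auto simp: is_lowest_def)
    moreover have "(i', j') \<noteq> (i, j)" using y unz by (auto simp: y_def c_def)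
    ultimately show "j < j' \<or> (j = j' \<and> i < i')" by auto
  qed
  ultimately have "\<exists>w\<in>V. \<forall>i j. j \<le> 0 \<longrightarrow> w i j = y i j" by (rule lowest(5))
  then obtain w' where w': "w' \<in> V" "\<forall>i j. j \<le> 0 \<longrightarrow> w' i j = y i j" by blast
  have lin: "(\<lambda>i j. 1 * w' i j + c * u i j) \<in> V" by (rule subspace2_lin[OF V(1) w'(1) u(1)])
  show ?case
  proof (rule rev_bexI[OF lin], intro allI impI)
    fix i j :: int assume "j \<le> 0"
    then show "1 * w' i j + c * u i j = x i j" using w'(2) by (simp add: y_def)
  qed
qed

section \<open>The image of a monomial under 1 + S^-\<close>

lemma mono_image_add:
  "mono_image a b (E_add P Q) i j = mono_image a b P i j + mono_image a b Q i j"
  by (auto simp: mono_image_def mono_term_def E_add_def sum.distrib[symmetric]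
      algebra_simps intro!: sum.cong)

lemma mono_image_one: "mono_image a b (E_one :: ('k::field_char_0) op) = zmono a b"
proof (intro ext)
  fix i j
  show "mono_image a b (E_one :: 'k op) i j = zmono a b i j"
  proof (cases "i \<le> 0")
    case True
    have "mono_term a b (E_one :: 'k op) i j p
        = (if p = (0, 0) then (if i = - int a \<and> j = - int b then 1 else 0) else 0)" for p
    proof (cases p)
      case (Pair al be)
      have "E_one (nat (-i) + al - a) (- j - int b + int be) al be = (1 :: 'k)
          \<longleftrightarrow> al = 0 \<and> be = 0 \<and> nat (-i) = a \<and> j = - int b" if "a \<le> nat (-i) + al"
        using that by (auto simp: E_one_def)
      then show ?thesis using True Pair by (auto simp: mono_term_def E_one_def)
    qed
    then show ?thesis using True by (simp add: mono_image_def point_def sum.delta)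
  qed (simp add: mono_image_def point_def)
qed

text \<open>A family f of Taylor coefficients: f al be r n is the coefficient of
  x1^al x2^be in the coefficient of d1^r d2^n of an operator.\<close>
definition op_of_coeffs :: "(nat \<Rightarrow> nat \<Rightarrow> nat \<Rightarrow> int \<Rightarrow> 'k) \<Rightarrow> 'k op" where
  "op_of_coeffs f = (\<lambda>r n i j. f i j r n)"

definition admissible :: "(nat \<Rightarrow> nat \<Rightarrow> nat \<Rightarrow> int \<Rightarrow> 'k::zero) \<Rightarrow> nat \<Rightarrow> nat \<Rightarrow> bool" where
  "admissible f a b \<longleftrightarrow> (\<forall>r n. n \<ge> 0 \<longrightarrow> f a b r n = 0) \<and> (\<forall>n. finite {r. f a b r n \<noteq> 0})"

definition lower_part :: "nat \<Rightarrow> nat \<Rightarrow> (nat \<Rightarrow> nat \<Rightarrow> nat \<Rightarrow> int \<Rightarrow> ('k::field_char_0)) \<Rightarrow> 'k ser2" where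
  "lower_part a b f = (\<lambda>i j. if i \<le> 0
     then (\<Sum>p\<in>{..a} \<times> {..b} - {(a, b)}. mono_term a b (op_of_coeffs f) i j p) else 0)"

definition top_part :: "nat \<Rightarrow> nat \<Rightarrow> (nat \<Rightarrow> nat \<Rightarrow> nat \<Rightarrow> int \<Rightarrow> ('k::field_char_0)) \<Rightarrow> 'k ser2" where
  "top_part a b f = (\<lambda>i j. if i \<le> 0 then fact a * fact b * f a b (nat (-i)) (-j) else 0)"

lemma mono_image_coeffs:
  "mono_image a b (op_of_coeffs f) i j = lower_part a b f i j + top_part a b f i j"
proof -
  have "(\<Sum>p\<in>{..a} \<times> {..b}. mono_term a b (op_of_coeffs f) i j p)
      = mono_term a b (op_of_coeffs f) i j (a, b)
        + (\<Sum>p\<in>{..a} \<times> {..b} - {(a, b)}. mono_term a b (op_of_coeffs f) i j p)"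
    by (rule sum.remove) auto
  then show ?thesis
    by (simp add: mono_image_def lower_part_def top_part_def mono_term_def op_of_coeffs_def)
qed

lemma mono_image_one_plus:
  "mono_image a b (E_add E_one (op_of_coeffs f)) i j
     = zmono a b i j + lower_part a b f i j + top_part a b f i j"
  by (simp add: mono_image_add mono_image_one mono_image_coeffs)

lemma lower_order_less:
  "al \<le> a \<Longrightarrow> be \<le> b \<Longrightarrow> (al, be) \<noteq> (a, b) \<Longrightarrow> al + be < (a::nat) + b"
  by (cases "al = a") auto

lemma lower_part_cong:
  assumes "\<And>al be. al \<le> a \<Longrightarrow> be \<le> b \<Longrightarrow> (al, be) \<noteq> (a, b) \<Longrightarrow> f al be = g al be"
  shows "lower_part a b f = lower_part a b g"
  unfolding lower_part_def
proof (intro ext if_cong refl sum.cong)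
  fix i j p assume "p \<in> {..a} \<times> {..b} - {(a, b)}"
  then show "mono_term a b (op_of_coeffs f) i j p = mono_term a b (op_of_coeffs g) i j p"
    using assms[of "fst p" "snd p"] by (auto simp: mono_term_def op_of_coeffs_def split: prod.splits)
qed

lemma lower_part_support:
  assumes adm: "\<And>al be. al \<le> a \<Longrightarrow> be \<le> b \<Longrightarrow> (al, be) \<noteq> (a, b) \<Longrightarrow> admissible f al be"
    and nz: "lower_part a b f i j \<noteq> 0"
  shows "i \<le> 0 \<and> j > - int b \<and> (\<exists>al\<le>a. \<exists>be\<le>b. (al, be) \<noteq> (a, b) \<and> a \<le> nat (-i) + al
           \<and> f al be (nat (-i) + al - a) (- j - int b + int be) \<noteq> 0)"
proof -
  let ?S = "{..a} \<times> {..b} - {(a, b)}"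
  have i: "i \<le> 0" using nz by (simp add: lower_part_def split: if_splits)
  with nz have "sum (mono_term a b (op_of_coeffs f) i j) ?S \<noteq> 0" by (simp add: lower_part_def)
  then obtain p where p: "p \<in> ?S" and t: "mono_term a b (op_of_coeffs f) i j p \<noteq> 0"
    by (rule sum.not_neutral_contains_not_neutral)
  obtain al be where albe: "p = (al, be)" by (cases p)
  with p have range: "al \<le> a" "be \<le> b" "(al, be) \<noteq> (a, b)" by auto
  from t albe have c: "a \<le> nat (-i) + al"
    and fnz: "f al be (nat (-i) + al - a) (- j - int b + int be) \<noteq> 0"
    by (auto simp: mono_term_def op_of_coeffs_def split: if_splits)
  have "admissible f al be" using adm range by blast
  then have "- j - int b + int be < 0" using fnz unfolding admissible_def by (meson not_le)
  then have "j > - int b" by linarith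
  then show ?thesis using i range c fnz by blast
qed

lemma lower_part_Vsp:
  fixes f :: "nat \<Rightarrow> nat \<Rightarrow> nat \<Rightarrow> int \<Rightarrow> 'k::field_char_0"
  assumes adm: "\<And>al be. al \<le> a \<Longrightarrow> be \<le> b \<Longrightarrow> (al, be) \<noteq> (a, b) \<Longrightarrow> admissible f al be"
  shows "lower_part a b f \<in> Vsp"
proof -
  let ?R = "\<lambda>j al be. {r. (al, be) \<noteq> (a, b) \<and> f al be r (- j - int b + int be) \<noteq> 0}"
  have "\<forall>j < - int b. \<forall>i. lower_part a b f i j = 0" using lower_part_support[OF adm] by fastforce
  moreover have "finite {i. lower_part a b f i j \<noteq> 0}" for j
  proof (rule finite_subset)
    show "{i. lower_part a b f i j \<noteq> 0}
        \<subseteq> (\<Union>al\<in>{..a}. \<Union>be\<in>{..b}. (\<lambda>r. - (int r + int a - int al)) ` ?R j al be)"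
    proof
      fix i assume "i \<in> {i. lower_part a b f i j \<noteq> 0}"
      then obtain al be where s: "i \<le> 0" "al \<le> a" "be \<le> b" "(al, be) \<noteq> (a, b)" "a \<le> nat (-i) + al"
        "f al be (nat (-i) + al - a) (- j - int b + int be) \<noteq> 0"
        using lower_part_support[OF adm] by blast
      then have "i = - (int (nat (-i) + al - a) + int a - int al)" by simp
      then show "i \<in> (\<Union>al\<in>{..a}. \<Union>be\<in>{..b}. (\<lambda>r. - (int r + int a - int al)) ` ?R j al be)"
        using s by blast
    qed
    have "finite (?R j al be)" if "al \<le> a" "be \<le> b" for al be
      using adm[OF that] unfolding admissible_def by (cases "(al, be) = (a, b)") auto
    then show "finite (\<Union>al\<in>{..a}. \<Union>be\<in>{..b}. (\<lambda>r. - (int r + int a - int al)) ` ?R j al be)"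
      by auto
  qed
  moreover have "\<forall>i j. i > 0 \<longrightarrow> lower_part a b f i j = 0" by (simp add: lower_part_def)
  ultimately show ?thesis unfolding Vsp_def by blast
qed

lemma mono_plus_lower_Vsp:
  fixes f :: "nat \<Rightarrow> nat \<Rightarrow> nat \<Rightarrow> int \<Rightarrow> 'k::field_char_0"
  assumes "\<And>al be. al \<le> a \<Longrightarrow> be \<le> b \<Longrightarrow> (al, be) \<noteq> (a, b) \<Longrightarrow> admissible f al be"
  shows "(\<lambda>i j. zmono a b i j + lower_part a b f i j) \<in> Vsp"
proof -
  have "zmono a b \<in> Vsp" by (rule point_Vsp) simp
  moreover have "lower_part a b f \<in> Vsp" using assms by (rule lower_part_Vsp)
  ultimately show ?thesis using Vsp_lin[of "zmono a b" "lower_part a b f" 1 1] by simp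
qed

lemma top_part_support:
  assumes "\<forall>r n. n \<ge> 0 \<longrightarrow> f a b r n = 0" "top_part a b f i j \<noteq> 0"
  shows "j > 0"
proof -
  from assms(2) have "f a b (nat (-i)) (-j) \<noteq> 0" by (auto simp: top_part_def split: if_splits)
  then show ?thesis using assms(1) by (meson neg_0_le_iff_le not_le)
qed

lemma mono_image_one_plus_lowest:
  assumes adm: "\<And>al be. al \<le> a \<Longrightarrow> be \<le> b \<Longrightarrow> admissible f al be"
  shows "is_lowest (mono_image a b (E_add E_one (op_of_coeffs f))) (- int a) (- int b)"
proof -
  let ?U = "mono_image a b (E_add E_one (op_of_coeffs f))"
  have lower: "lower_part a b f i j \<noteq> 0 \<Longrightarrow> j > - int b" for i j
    using lower_part_support[OF adm] by blast
  have top: "top_part a b f i j \<noteq> 0 \<Longrightarrow> j > 0" for i j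
    using top_part_support adm[of a b] unfolding admissible_def by blast
  have "lower_part a b f (- int a) (- int b) = 0" using lower by fastforce
  moreover have "top_part a b f (- int a) (- int b) = 0" using top by fastforce
  ultimately have "?U (- int a) (- int b) = 1" by (simp add: mono_image_one_plus point_def)
  moreover have "j > - int b" if "?U i j \<noteq> 0" "(i, j) \<noteq> (- int a, - int b)" for i j
  proof -
    have "lower_part a b f i j \<noteq> 0 \<or> top_part a b f i j \<noteq> 0"
      using that by (auto simp: mono_image_one_plus point_def)
    then show ?thesis using lower top by force
  qed
  ultimately show ?thesis unfolding is_lowest_def by force
qed

lemma is_Sminus_op_of_coeffs:
  fixes f :: "nat \<Rightarrow> nat \<Rightarrow> nat \<Rightarrow> int \<Rightarrow> 'k::field_char_0"
  assumes adm: "\<And>a b. admissible f a b"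
  shows "is_Sminus (op_of_coeffs f)"
proof -
  have Z: "\<forall>q m. m \<ge> 0 \<longrightarrow> op_of_coeffs f q m = (\<lambda>_ _. 0)"
    using adm unfolding admissible_def op_of_coeffs_def by (auto intro!: ext)
  have D: "is_D1hat (\<lambda>q. op_of_coeffs f q m)" for m
    unfolding is_D1hat_def
  proof
    fix n
    define B where "B = (\<Union>i<n. \<Union>j<n. {q. f i j q m \<noteq> 0})"
    have "finite B" unfolding B_def using adm unfolding admissible_def by auto
    then obtain Q where "B \<subseteq> {..<Q}" by (auto simp: finite_nat_set_iff_bounded)
    then have "\<forall>q\<ge>Q. in_Mpow (op_of_coeffs f q m) n"
      unfolding in_Mpow_def op_of_coeffs_def B_def by fastforce
    then show "\<exists>Q. \<forall>q\<ge>Q. in_Mpow (op_of_coeffs f q m) n" by blast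
  qed
  have "\<exists>M. \<forall>m>M. \<forall>q. op_of_coeffs f q m = (\<lambda>_ _. 0)" using Z by (intro exI[of _ "-1"]) auto
  then show ?thesis unfolding is_Sminus_def is_Eplus_def using Z D by blast
qed

section \<open>Subspaces with support W0\<close>

locale supp_W0 =
  fixes W :: "('k::field_char_0) ser2 set"
  assumes W_Vsp: "W \<subseteq> Vsp" and W_subspace: "subspace2 W" and W_Supp: "Supp W = W0"
begin

lemmas W_lin = subspace2_lin[OF W_subspace]

lemmas W_zero = subspace2_zero[OF W_subspace]

lemma W_sum: "finite F \<Longrightarrow> \<forall>p\<in>F. g p \<in> W \<Longrightarrow> (\<lambda>i j. \<Sum>p\<in>F. c p * g p i j) \<in> W"
proof (induction F rule: finite_induct)
  case empty then show ?case using W_zero by simp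
next
  case (insert p F)
  then have "(\<lambda>i j. 1 * (\<Sum>p\<in>F. c p * g p i j) + c p * g p i j) \<in> W"
    by (intro W_lin) auto
  then show ?case using insert by (simp add: add.commute)
qed

lemma point_Supp_iff: "point i j \<in> Supp W \<longleftrightarrow> (i, j) \<in> lt_exp ` (W - {\<lambda>_ _. 0})"
  using point_L2[of i j] unfolding Supp_def point_def by auto

lemma lowest_nonpos:
  assumes "w \<in> W" "is_lowest w i j" shows "i \<le> 0 \<and> j \<le> 0"
proof -
  have "w \<noteq> (\<lambda>_ _. 0)" using assms(2) by (auto simp: is_lowest_def)
  then have "(i, j) \<in> lt_exp ` (W - {\<lambda>_ _. 0})"
    using lt_exp_lowest[OF assms(2)] assms(1) by force
  then show ?thesis using point_Supp_iff point_W0_iff W_Supp by blast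
qed

lemma lowest_realized:
  assumes "i \<le> 0" "j \<le> 0" shows "\<exists>w\<in>W. is_lowest w i j"
proof -
  have "point i j \<in> Supp W" using assms W_Supp by (simp add: point_W0_iff)
  then have "(i, j) \<in> lt_exp ` (W - {\<lambda>_ _. 0})" using point_Supp_iff by blast
  then obtain w where "w \<in> W - {\<lambda>_ _. 0}" and lt: "(i, j) = lt_exp w" by (rule imageE)
  then have w: "w \<in> W" "w \<noteq> (\<lambda>_ _. 0)" by auto
  from w(2) obtain i0 j0 where "w i0 j0 \<noteq> 0" by (meson ext)
  moreover have "w \<in> Vsp" using w(1) W_Vsp by blast
  ultimately obtain i' j' where low: "is_lowest w i' j'" using lowest_exists by blast
  then have "(i', j') = (i, j)" using lt_exp_lowest[OF low] lt by simp
  then show ?thesis using low w(1) by blast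
qed

lemma W_pos_zero:
  assumes w: "w \<in> W" and pos: "\<forall>i j. w i j \<noteq> 0 \<longrightarrow> j > 0"
  shows "w = (\<lambda>_ _. 0)"
proof (rule ccontr)
  assume "w \<noteq> (\<lambda>_ _. 0)"
  then obtain i0 j0 where "w i0 j0 \<noteq> 0" by (meson ext)
  then obtain i j where m: "is_lowest w i j" using lowest_exists w W_Vsp by blast
  then have "j \<le> 0" using lowest_nonpos w by blast
  then show False using m pos by (force simp: is_lowest_def)
qed

lemma W_eq_if_nonpos_eq:
  assumes w: "w \<in> W" "w' \<in> W" and eq: "\<forall>i j. j \<le> 0 \<longrightarrow> w i j = w' i j"
  shows "w = w'"
proof -
  have "\<forall>i j. 1 * w i j + (-1) * w' i j \<noteq> 0 \<longrightarrow> j > 0"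
  proof (intro allI impI)
    fix i j assume "1 * w i j + (-1) * w' i j \<noteq> 0"
    then show "j > 0" using eq by (cases "j \<le> 0") auto
  qed
  then have d: "(\<lambda>i j. 1 * w i j + (-1) * w' i j) = (\<lambda>_ _. 0)"
    using W_pos_zero W_lin[OF w] by blast
  show ?thesis
  proof (intro ext)
    fix i j
    have "1 * w i j + (-1) * w' i j = 0" using fun_cong[OF fun_cong[OF d, of i], of j] by simp
    then show "w i j = w' i j" by simp
  qed
qed

lemma W_extends:
  assumes "x \<in> Vsp" shows "\<exists>w\<in>W. \<forall>i j. j \<le> 0 \<longrightarrow> w i j = x i j"
  using extend_by_lowest_terms[OF W_subspace W_Vsp lowest_realized assms] .

definition W_lift :: "'k ser2 \<Rightarrow> 'k ser2" where
  "W_lift x = (SOME w. w \<in> W \<and> (\<forall>i j. j \<le> 0 \<longrightarrow> w i j = x i j))"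

lemma W_lift:
  assumes "x \<in> Vsp" shows "W_lift x \<in> W" and "\<forall>i j. j \<le> 0 \<longrightarrow> W_lift x i j = x i j"
proof -
  have "\<exists>w. w \<in> W \<and> (\<forall>i j. j \<le> 0 \<longrightarrow> w i j = x i j)" using W_extends[OF assms] by blast
  then have "W_lift x \<in> W \<and> (\<forall>i j. j \<le> 0 \<longrightarrow> W_lift x i j = x i j)"
    unfolding W_lift_def by (rule someI_ex)
  then show "W_lift x \<in> W" and "\<forall>i j. j \<le> 0 \<longrightarrow> W_lift x i j = x i j" by auto
qed

text \<open>A subspace V of W containing elements with every lowest term allowed by
  Supp W = W0 is all of W: an element of W agrees in z2-degrees <= 0 with an element of V.\<close>
lemma W_subset_by_lowest_terms:
  assumes V: "subspace2 V" "V \<subseteq> W"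
    and low: "\<And>i j. i \<le> 0 \<Longrightarrow> j \<le> 0 \<Longrightarrow> \<exists>u\<in>V. is_lowest u i j"
  shows "W \<subseteq> V"
proof
  fix x assume x: "x \<in> W"
  have "V \<subseteq> Vsp" using V(2) W_Vsp by blast
  with x W_Vsp obtain v where "v \<in> V" "\<forall>i j. j \<le> 0 \<longrightarrow> v i j = x i j"
    using extend_by_lowest_terms[OF V(1) _ low] by blast
  moreover from this have "v = x" using W_eq_if_nonpos_eq V(2) x by blast
  ultimately show "x \<in> V" by simp
qed

end

section \<open>The recursive construction of S\<close>

context supp_W0
begin

text \<open>Once the Taylor coefficients of the orders below (a, b) are known, z1^-a z2^-b S
  is known up to its top part, say x = z1^-a z2^-b + lower part.  For z1^-a z2^-b S to
  lie in W, the top part must be W_lift x - x, which determines the order (a, b).\<close>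
definition coeff_step :: "nat \<Rightarrow> nat \<Rightarrow> 'k ser2 \<Rightarrow> nat \<Rightarrow> int \<Rightarrow> 'k" where
  "coeff_step a b x = (\<lambda>r n. if n < 0
     then (W_lift x (- int r) (- n) - x (- int r) (- n)) / (fact a * fact b) else 0)"

text \<open>coeff_layer N holds the Taylor coefficients of all orders (al, be) with al + be < N.\<close>
primrec coeff_layer :: "nat \<Rightarrow> nat \<Rightarrow> nat \<Rightarrow> nat \<Rightarrow> int \<Rightarrow> 'k" where
  "coeff_layer 0 = (\<lambda>_ _ _ _. 0)"
| "coeff_layer (Suc N) = (\<lambda>al be. if al + be = N
     then coeff_step al be (\<lambda>i j. zmono al be i j + lower_part al be (coeff_layer N) i j)
     else coeff_layer N al be)"

definition coeffs :: "nat \<Rightarrow> nat \<Rightarrow> nat \<Rightarrow> int \<Rightarrow> 'k" where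
  "coeffs al be = coeff_layer (Suc (al + be)) al be"

text \<open>The value of z1^-a z2^-b S forced outside the top part.\<close>
definition seed :: "nat \<Rightarrow> nat \<Rightarrow> 'k ser2" where
  "seed a b = (\<lambda>i j. zmono a b i j + lower_part a b coeffs i j)"

definition S_op :: "'k op" where
  "S_op = E_add E_one (op_of_coeffs coeffs)"

lemma coeff_layer_coeffs: "al + be < N \<Longrightarrow> coeff_layer N al be = coeffs al be"
  by (induction N) (auto simp: coeffs_def)

lemma coeffs_step: "coeffs a b = coeff_step a b (seed a b)"
proof -
  have "lower_part a b (coeff_layer (a + b)) = lower_part a b coeffs"
    by (intro lower_part_cong coeff_layer_coeffs lower_order_less)
  then show ?thesis by (simp add: coeffs_def seed_def)
qed

lemma coeff_step_admissible:
  assumes "x \<in> Vsp"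
  shows "(\<forall>r n. n \<ge> 0 \<longrightarrow> coeff_step a b x r n = 0) \<and> (\<forall>n. finite {r. coeff_step a b x r n \<noteq> 0})"
proof -
  have "finite {r. coeff_step a b x r n \<noteq> 0}" for n
  proof (rule finite_subset)
    show "{r. coeff_step a b x r n \<noteq> 0} \<subseteq> (\<lambda>r. - int r) -` ({i. W_lift x i (- n) \<noteq> 0} \<union> {i. x i (- n) \<noteq> 0})"
      by (auto simp: coeff_step_def)
    have "W_lift x \<in> Vsp" using W_lift(1)[OF assms] W_Vsp by blast
    then show "finite ((\<lambda>r. - int r) -` ({i. W_lift x i (- n) \<noteq> 0} \<union> {i. x i (- n) \<noteq> 0}))"
      using assms unfolding Vsp_def by (intro finite_vimageI) (auto simp: inj_on_def)
  qed
  then show ?thesis by (simp add: coeff_step_def)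
qed

lemma coeffs_admissible: "admissible coeffs a b"
proof (induction "a + b" arbitrary: a b rule: less_induct)
  case less
  have "seed a b \<in> Vsp"
    unfolding seed_def by (rule mono_plus_lower_Vsp) (use less lower_order_less in blast)
  then show ?case
    using coeff_step_admissible by (simp add: admissible_def coeffs_step)
qed

lemma seed_Vsp: "seed a b \<in> Vsp"
  unfolding seed_def by (rule mono_plus_lower_Vsp) (rule coeffs_admissible)

lemma is_Sminus_coeffs: "is_Sminus (op_of_coeffs coeffs)"
  by (rule is_Sminus_op_of_coeffs) (rule coeffs_admissible)

lemma mono_image_S_op: "mono_image a b S_op = W_lift (seed a b)"
proof (intro ext)
  fix i j
  have liftV: "W_lift (seed a b) \<in> Vsp" using W_lift(1)[OF seed_Vsp] W_Vsp by blast
  have split: "mono_image a b S_op i j = seed a b i j + top_part a b coeffs i j"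
    by (simp add: S_op_def mono_image_one_plus seed_def)
  show "mono_image a b S_op i j = W_lift (seed a b) i j"
  proof (cases "i \<le> 0")
    case True
    have "top_part a b coeffs i j = (if j > 0 then W_lift (seed a b) i j - seed a b i j else 0)"
      using True by (simp add: top_part_def coeffs_step coeff_step_def)
    then show ?thesis using split W_lift(2)[OF seed_Vsp] by (cases "j > 0") auto
  next
    case False
    then show ?thesis using liftV by (simp add: mono_image_def Vsp_def)
  qed
qed

lemma mono_image_S_op_in_W: "mono_image a b S_op \<in> W"
  unfolding mono_image_S_op by (rule W_lift(1)[OF seed_Vsp])

text \<open>Existence: W0 S = W.  The image is a subspace of W (each monomial goes into W)
  containing z1^-a z2^-b S, whose lowest term is z1^-a z2^-b.\<close>
lemma image_S_op: "(\<lambda>v. act v S_op) ` W0 = W"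
proof
  show image_sub: "(\<lambda>v. act v S_op) ` W0 \<subseteq> W"
  proof clarify
    fix v :: "'k ser2" assume v: "v \<in> W0"
    have "act v S_op = (\<lambda>i j. \<Sum>p\<in>msupp v. v (- int (fst p)) (- int (snd p))
                                       * mono_image (fst p) (snd p) S_op i j)"
      using act_as_sum[OF v finite_msupp[OF v]] by (intro ext) (simp add: split_def)
    also have "\<dots> \<in> W"
      using finite_msupp[OF v] mono_image_S_op_in_W by (intro W_sum) auto
    finally show "act v S_op \<in> W" .
  qed
  show "W \<subseteq> (\<lambda>v. act v S_op) ` W0"
  proof (rule W_subset_by_lowest_terms[OF subspace2_act_image image_sub])
    fix i j :: int assume "i \<le> 0" "j \<le> 0"
    then have ij: "i = - int (nat (-i))" "j = - int (nat (-j))" by simp_all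
    have "is_lowest (mono_image (nat (-i)) (nat (-j)) S_op) i j"
      unfolding S_op_def using mono_image_one_plus_lowest[OF coeffs_admissible] ij by metis
    moreover have "mono_image (nat (-i)) (nat (-j)) S_op \<in> (\<lambda>v. act v S_op) ` W0"
    proof (rule image_eqI)
      show "mono_image (nat (-i)) (nat (-j)) S_op = act (zmono (nat (-i)) (nat (-j))) S_op"
        by (rule act_zmono[symmetric])
      show "(zmono (nat (-i)) (nat (-j)) :: 'k ser2) \<in> W0" by (simp add: point_W0_iff)
    qed
    ultimately show "\<exists>u\<in>(\<lambda>v. act v S_op) ` W0. is_lowest u i j" by blast
  qed
qed

text \<open>By
  induction on a + b, the lower parts agree, so the two images of z1^-a z2^-b are
  elements of W agreeing in z2-degrees <= 0, hence equal; thus the top parts agree.\<close>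
lemma coeffs_unique:
  assumes neg: "\<And>a b r n. n \<ge> 0 \<Longrightarrow> f a b r n = 0"
    and inW: "\<And>a b. mono_image a b (E_add E_one (op_of_coeffs f)) \<in> W"
  shows "f = coeffs"
proof (rule ext, rule ext)
  fix a b
  show "f a b = coeffs a b"
  proof (induction "a + b" arbitrary: a b rule: less_induct)
    case less
    have lower: "lower_part a b f = lower_part a b coeffs"
      using less lower_order_less by (intro lower_part_cong) blast
    have top_f: "top_part a b f i j = 0" and top_c: "top_part a b coeffs i j = 0" if "j \<le> 0" for i j
      using that top_part_support[of f a b i j] top_part_support[of coeffs a b i j]
        neg coeffs_admissible[of a b] unfolding admissible_def by force+
    have eq: "mono_image a b (E_add E_one (op_of_coeffs f)) = mono_image a b S_op"
      using inW mono_image_S_op_in_W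
    proof (rule W_eq_if_nonpos_eq, intro allI impI)
      fix i j :: int assume "j \<le> 0"
      then show "mono_image a b (E_add E_one (op_of_coeffs f)) i j = mono_image a b S_op i j"
        by (simp add: S_op_def mono_image_one_plus lower top_f top_c)
    qed
    have top: "top_part a b f i j = top_part a b coeffs i j" for i j
      using fun_cong[OF fun_cong[OF eq, of i], of j]
      by (simp add: S_op_def mono_image_one_plus lower)
    show "f a b = coeffs a b"
    proof (intro ext)
      fix r n
      show "f a b r n = coeffs a b r n" using top[of "- int r" "- n"] by (simp add: top_part_def)
    qed
  qed
qed

lemma S_op_unique:
  assumes Sm: "is_Sminus Sm" and img: "(\<lambda>v. act v (E_add E_one Sm)) ` W0 = W"
  shows "E_add E_one Sm = S_op"
proof -
  define f where "f = (\<lambda>al be r n. Sm r n al be)"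
  have Sm_f: "Sm = op_of_coeffs f" by (simp add: f_def op_of_coeffs_def)
  have "f = coeffs"
  proof (rule coeffs_unique)
    show "f a b r n = 0" if "n \<ge> 0" for a b r n
      using Sm that unfolding is_Sminus_def f_def by simp
    have "act (zmono a b) (E_add E_one Sm) \<in> W" for a b using img by (auto simp: point_W0_iff)
    then show "mono_image a b (E_add E_one (op_of_coeffs f)) \<in> W" for a b
      by (simp add: act_zmono Sm_f)
  qed
  then show ?thesis by (simp add: Sm_f S_op_def)
qed

end

theorem theorem1:
  fixes W :: "('k::field_char_0) ser2 set"
  assumes "W \<subseteq> Vsp" and "subspace2 W" and "closed2 W" and "Supp W = W0"
  shows "\<exists>!S. (\<exists>Sm. is_Sminus Sm \<and> S = E_add E_one Sm) \<and> (\<lambda>v. act v S) ` W0 = W"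
proof -
  interpret supp_W0 W using assms(1,2,4) by unfold_locales
  show ?thesis
  proof (rule ex1I)
    show "(\<exists>Sm. is_Sminus Sm \<and> S_op = E_add E_one Sm) \<and> (\<lambda>v. act v S_op) ` W0 = W"
      using is_Sminus_coeffs image_S_op by (auto simp: S_op_def)
  next
    fix S assume "(\<exists>Sm. is_Sminus Sm \<and> S = E_add E_one Sm) \<and> (\<lambda>v. act v S) ` W0 = W"
    then show "S = S_op" using S_op_unique by blast
  qed
qed

end
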